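(* Let $n,k$ be positive integers with $n\geq k$ and $n> 3(n-k)$. Then for every $C\in\mathcal{K}_k(n)$, the diagram $\beta_{n,k}(C)$ lies in $\mathcal{K}_{k-1}(n-1)$.
   Context: A linear chord diagram of size $n$ is a partition of $\{1,2,\dots,2n\}$ into blocks of size two, called chords. For a chord $c=\{s_c,e_c\}$ with $s_c<e_c$, $s_c$ is its start point, $e_c$ its end point, and its length is $e_c-s_c$. $\mathcal{K}_k(n)$ is the set of all linear chord diagrams of size $n$ in which every chord has length at least $k$. Let $M_{n,k}=\{k+1,\dots,2n-k\}$, and for a diagram $C$ of size $n$ let $S_C$ be the set of chords of $C$ with neither endpoint in $M_{n,k}$. The map $\beta_{n,k}$ is defined on $C\in\mathcal{K}_k(n)$ as follows. Let $c$ be the chord whose end point is $2n-k+1$ (the position immediately after $M_{n,k}$). Repeatedly swap the start point of $c$ with the nearest start point to its right belonging to a chord of $S_C$ (the two chords exchange these start positions), until no start point of a chord of $S_C$ lies to the right of the start point of $c$. Then remove the chord $c$ and relabel the remaining $2n-2$ points $1,\dots,2n-2$ preserving order. The result is $\beta_{n,k}(C)$, a diagram of size $n-1$. *)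

theory Defs
  imports Main
begin

type_synonym chord = "nat \<times> nat"
type_synonym diagram = "chord set"

definition is_diagram :: "nat \<Rightarrow> diagram \<Rightarrow> bool" where
  "is_diagram n C \<longleftrightarrow>
     (\<forall>c\<in>C. fst c < snd c \<and> fst c \<in> {1..2*n} \<and> snd c \<in> {1..2*n}) \<and>
     (\<forall>p\<in>{1..2*n}. \<exists>!c\<in>C. p = fst c \<or> p = snd c)"

definition K :: "nat \<Rightarrow> nat \<Rightarrow> diagram set" where
  "K k n = {C. is_diagram n C \<and> (\<forall>c\<in>C. snd c - fst c \<ge> k)}"

definition Mset :: "nat \<Rightarrow> nat \<Rightarrow> nat set" where
  "Mset n k = {k+1..2*n-k}"

text \<open>Chords of S_C (neither endpoint in M). Since the swaps only move start points,
chords are tracked through the procedure by their (unchanging) end points.\<close>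
definition S_ends :: "nat \<Rightarrow> nat \<Rightarrow> diagram \<Rightarrow> nat set" where
  "S_ends n k C = {e. \<exists>s. (s, e) \<in> C \<and> s \<notin> Mset n k \<and> e \<notin> Mset n k}"

text \<open>One swap step of the procedure applied to the current diagram D, where C0 is the
original diagram (defining S_C), and c is the chord with end point 2n-k+1.\<close>
definition swap_step :: "nat \<Rightarrow> nat \<Rightarrow> diagram \<Rightarrow> diagram \<Rightarrow> diagram" where
  "swap_step n k C0 D =
     (let e0 = 2*n - k + 1;
          s = (THE s. (s, e0) \<in> D);
          cands = {t. \<exists>e'. (t, e') \<in> D \<and> e' \<in> S_ends n k C0 \<and> s < t}
      in if cands = {} then D
         else (let t = Min cands;
                   e' = (THE e'. (t, e') \<in> D)
               in (D - {(s, e0), (t, e')}) \<union> {(t, e0), (s, e')}))"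

text \<open>The start point of c strictly increases at each effective step and stays within
{1..2n}, so 2n iterations reach the point where no further swap is possible.\<close>
definition beta :: "nat \<Rightarrow> nat \<Rightarrow> diagram \<Rightarrow> diagram" where
  "beta n k C =
     (let e0 = 2*n - k + 1;
          D = (swap_step n k C ^^ (2*n)) C;
          s = (THE s. (s, e0) \<in> D);
          r = (\<lambda>p. p - (if s < p then 1 else 0) - (if e0 < p then 1 else 0))
      in (\<lambda>(a, b). (r a, r b)) ` (D - {(s, e0)}))"

end

theory Submission
  imports Defs
begin

text \<open>Throughout the sweep the moving chord c ends at 2n-k+1 and starts at some s \<le> k, and it only
  trades start points with chords of S_C, which also start at or before k. Hence every other chord
  keeps length at least k, and one passing over both ends of c even has length at least k+1: a
  swap cannot create such a chord, because the partner is chosen minimal and an untouched chord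
  ending to the right of M starts inside M, i.e. to the right of k. Deleting c and closing the
  two gaps shortens a chord by two if it passes over both ends of c and by at most one otherwise.\<close>

lemma is_diagram_chord:
  assumes "is_diagram n D" "(a, b) \<in> D"
  shows "a < b" "1 \<le> a" "b \<le> 2*n"
proof -
  have "\<forall>c\<in>D. fst c < snd c \<and> fst c \<in> {1..2*n} \<and> snd c \<in> {1..2*n}"
    using assms(1) unfolding is_diagram_def by (rule conjunct1)
  from bspec[OF this assms(2)] show "a < b" "1 \<le> a" "b \<le> 2*n" by auto
qed

lemma is_diagram_ex1:
  assumes "is_diagram n D" "p \<in> {1..2*n}"
  shows "\<exists>!c\<in>D. p = fst c \<or> p = snd c"
proof -
  have "\<forall>p\<in>{1..2*n}. \<exists>!c\<in>D. p = fst c \<or> p = snd c"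
    using assms(1) unfolding is_diagram_def by (rule conjunct2)
  then show ?thesis using assms(2) ..
qed

lemma is_diagram_cover:
  assumes "is_diagram n D" "p \<in> {1..2*n}"
  obtains a b where "(a, b) \<in> D" "p \<in> {a, b}"
  using is_diagram_ex1[OF assms] that by (metis insert_iff prod.collapse)

lemma is_diagram_unique:
  assumes "is_diagram n D" "(a, b) \<in> D" "(a', b') \<in> D" "p \<in> {a, b}" "p \<in> {a', b'}"
  shows "(a, b) = (a', b')"
proof -
  have "p \<in> {1..2*n}" using assms(4) is_diagram_chord[OF assms(1,2)] by auto
  from is_diagram_ex1[OF assms(1) this] assms(2-5) show ?thesis
    by (metis fst_conv insertE singletonD snd_conv)
qed

lemma is_diagramI:
  assumes "\<And>a b. (a, b) \<in> D \<Longrightarrow> a < b \<and> 1 \<le> a \<and> b \<le> 2*n"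
    and "\<And>p. p \<in> {1..2*n} \<Longrightarrow> \<exists>(a, b)\<in>D. p \<in> {a, b}"
    and "\<And>a b a' b' p. (a, b) \<in> D \<Longrightarrow> (a', b') \<in> D \<Longrightarrow> p \<in> {a, b} \<Longrightarrow> p \<in> {a', b'}
           \<Longrightarrow> (a, b) = (a', b')"
  shows "is_diagram n D"
  unfolding is_diagram_def
proof (rule conjI; rule ballI)
  fix c assume "c \<in> D"
  then show "fst c < snd c \<and> fst c \<in> {1..2*n} \<and> snd c \<in> {1..2*n}"
    using assms(1)[of "fst c" "snd c"] by simp
next
  fix p assume "p \<in> {1..2*n}"
  then obtain a b where ab: "(a, b) \<in> D" "p \<in> {a, b}" using assms(2) by blast
  show "\<exists>!c\<in>D. p = fst c \<or> p = snd c"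
  proof (rule ex1I[of _ "(a, b)"])
    show "(a, b) \<in> D \<and> (p = fst (a, b) \<or> p = snd (a, b))" using ab by auto
    fix c assume "c \<in> D \<and> (p = fst c \<or> p = snd c)"
    then show "c = (a, b)" using assms(3)[of "fst c" "snd c" a b p] ab by auto
  qed
qed

lemma the_start_eq:
  assumes "is_diagram n D" "(s, e) \<in> D"
  shows "(THE s. (s, e) \<in> D) = s"
proof (rule the_equality)
  fix s' assume "(s', e) \<in> D"
  then show "s' = s" using is_diagram_unique[OF assms(1) _ assms(2), of s' e e] by simp
qed (rule assms(2))

lemma the_end_eq:
  assumes "is_diagram n D" "(s, e) \<in> D"
  shows "(THE e. (s, e) \<in> D) = e"
proof (rule the_equality)
  fix e' assume "(s, e') \<in> D"
  then show "e' = e" using is_diagram_unique[OF assms(1) _ assms(2), of s e' s] by simp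
qed (rule assms(2))

lemma is_diagram_swap_starts:
  assumes D: "is_diagram n D" and c: "(s, e) \<in> D" and c': "(t, e') \<in> D" and "s < t" "t < e"
  shows "is_diagram n (D - {(s, e), (t, e')} \<union> {(t, e), (s, e')})"
proof -
  note chord = is_diagram_chord[OF D] and unique = is_diagram_unique[OF D]
  have "t < e'" using chord(1)[OF c'] .
  have "e' \<noteq> e" using unique[OF c c', of e] \<open>s < t\<close> by auto
  have avoid: "{a, b} \<inter> {s, t, e, e'} = {}"
    if "(a, b) \<in> D" "(a, b) \<noteq> (s, e)" "(a, b) \<noteq> (t, e')" for a b
    using that unique[OF that(1) c] unique[OF that(1) c'] by blast
  show ?thesis
  proof (rule is_diagramI)
    fix p assume "p \<in> {1..2*n}"
    then obtain a b where "(a, b) \<in> D" "p \<in> {a, b}" by (rule is_diagram_cover[OF D])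
    then show "\<exists>(a, b)\<in>D - {(s, e), (t, e')} \<union> {(t, e), (s, e')}. p \<in> {a, b}" by blast
  next
    fix a b assume "(a, b) \<in> D - {(s, e), (t, e')} \<union> {(t, e), (s, e')}"
    then show "a < b \<and> 1 \<le> a \<and> b \<le> 2*n"
      using chord[OF c] chord[OF c'] chord[of a b] \<open>s < t\<close> \<open>t < e\<close> \<open>t < e'\<close> by auto
  next
    fix a b a' b' p
    assume ab: "(a, b) \<in> D - {(s, e), (t, e')} \<union> {(t, e), (s, e')}"
      and ab': "(a', b') \<in> D - {(s, e), (t, e')} \<union> {(t, e), (s, e')}"
      and p: "p \<in> {a, b}" "p \<in> {a', b'}"
    have new_disjoint: "{t, e} \<inter> {s, e'} = {}"
      using \<open>s < t\<close> \<open>t < e\<close> \<open>t < e'\<close> \<open>e' \<noteq> e\<close> by auto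
    show "(a, b) = (a', b')"
    proof (cases "(a, b) \<in> D - {(s, e), (t, e')}"; cases "(a', b') \<in> D - {(s, e), (t, e')}")
      assume "(a, b) \<in> D - {(s, e), (t, e')}" "(a', b') \<in> D - {(s, e), (t, e')}"
      then show ?thesis using unique[of a b a' b' p] p by blast
    next
      assume "(a, b) \<in> D - {(s, e), (t, e')}" "(a', b') \<notin> D - {(s, e), (t, e')}"
      then show ?thesis using avoid[of a b] ab' p by blast
    next
      assume "(a, b) \<notin> D - {(s, e), (t, e')}" "(a', b') \<in> D - {(s, e), (t, e')}"
      then show ?thesis using avoid[of a' b'] ab p by blast
    next
      assume "(a, b) \<notin> D - {(s, e), (t, e')}" "(a', b') \<notin> D - {(s, e), (t, e')}"
      then show ?thesis using new_disjoint ab ab' p by blast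
    qed
  qed
qed

definition close_gaps :: "nat \<Rightarrow> nat \<Rightarrow> nat \<Rightarrow> nat" where
  "close_gaps s e p = p - (if s < p then 1 else 0) - (if e < p then 1 else 0)"

definition remove_chord :: "nat \<Rightarrow> nat \<Rightarrow> diagram \<Rightarrow> diagram" where
  "remove_chord s e D = (\<lambda>(a, b). (close_gaps s e a, close_gaps s e b)) ` (D - {(s, e)})"

lemma close_gaps_strict_mono:
  assumes "x < y" "x \<notin> {s, e}" "y \<notin> {s, e}" "s < e"
  shows "close_gaps s e x < close_gaps s e y"
  using assms unfolding close_gaps_def by auto

lemma close_gaps_inj:
  assumes "x \<notin> {s, e}" "y \<notin> {s, e}" "s < e" "close_gaps s e x = close_gaps s e y"
  shows "x = y"
  using close_gaps_strict_mono[of x y] close_gaps_strict_mono[of y x] assms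
  by (metis less_irrefl nat_neq_iff)

lemma close_gaps_range:
  assumes "s < e" "1 \<le> s" "e \<le> 2*N" "x \<in> {1..2*N}" "x \<notin> {s, e}"
  shows "close_gaps s e x \<in> {1..2*N - 2}"
  using assms unfolding close_gaps_def by auto

lemma close_gaps_surj:
  assumes "s < e" "1 \<le> s" "e \<le> 2*N" "p \<in> {1..2*N - 2}"
  obtains x where "x \<in> {1..2*N}" "x \<notin> {s, e}" "close_gaps s e x = p"
proof -
  consider "p < s" | "s \<le> p" "p + 1 < e" | "e \<le> p + 1" by linarith
  then show ?thesis
  proof cases
    case 1 then show ?thesis using assms by (intro that[of p]) (auto simp: close_gaps_def)
  next
    case 2 then show ?thesis using assms by (intro that[of "p + 1"]) (auto simp: close_gaps_def)
  next
    case 3 then show ?thesis using assms by (intro that[of "p + 2"]) (auto simp: close_gaps_def)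
  qed
qed

lemma close_gaps_length:
  assumes "x < y" "x \<notin> {s, e}" "y \<notin> {s, e}" "s < e"
  shows "y - x - (if x < s \<and> e < y then 2 else 1) \<le> close_gaps s e y - close_gaps s e x"
  using assms unfolding close_gaps_def by auto

lemma is_diagram_remove_chord:
  assumes D: "is_diagram n D" and c: "(s, e) \<in> D"
  shows "is_diagram (n - 1) (remove_chord s e D)"
proof -
  note chord = is_diagram_chord[OF D] and unique = is_diagram_unique[OF D]
  have se: "s < e" "1 \<le> s" "e \<le> 2*n" using chord[OF c] by auto
  have N: "2*(n - 1) = 2*n - 2" by simp
  have avoid: "{a, b} \<inter> {s, e} = {}" if "(a, b) \<in> D - {(s, e)}" for a b
    using that unique[of a b s e] c by blast
  show ?thesis
  proof (rule is_diagramI)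
    fix a' b' assume "(a', b') \<in> remove_chord s e D"
    then obtain a b where ab: "(a, b) \<in> D - {(s, e)}"
      and a'b': "a' = close_gaps s e a" "b' = close_gaps s e b"
      unfolding remove_chord_def by auto
    then show "a' < b' \<and> 1 \<le> a' \<and> b' \<le> 2*(n - 1)"
      using close_gaps_strict_mono[of a b s e] close_gaps_range[OF se, of a]
        close_gaps_range[OF se, of b] chord[of a b] avoid[OF ab] se(1) unfolding N by auto
  next
    fix p assume "p \<in> {1..2*(n - 1)}"
    then obtain x where x: "x \<in> {1..2*n}" "x \<notin> {s, e}" "close_gaps s e x = p"
      using close_gaps_surj[OF se] unfolding N by blast
    obtain a b where "(a, b) \<in> D" "x \<in> {a, b}" using is_diagram_cover[OF D x(1)] .
    then show "\<exists>(a', b')\<in>remove_chord s e D. p \<in> {a', b'}"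
      using x unfolding remove_chord_def by (intro bexI[of _ "(close_gaps s e a, close_gaps s e b)"]) auto
  next
    fix a1' b1' a2' b2' p
    assume in1: "(a1', b1') \<in> remove_chord s e D" and in2: "(a2', b2') \<in> remove_chord s e D"
      and p: "p \<in> {a1', b1'}" "p \<in> {a2', b2'}"
    from in1 obtain a1 b1 where ab1: "(a1, b1) \<in> D - {(s, e)}"
      and 1: "a1' = close_gaps s e a1" "b1' = close_gaps s e b1"
      unfolding remove_chord_def by auto
    from in2 obtain a2 b2 where ab2: "(a2, b2) \<in> D - {(s, e)}"
      and 2: "a2' = close_gaps s e a2" "b2' = close_gaps s e b2"
      unfolding remove_chord_def by auto
    obtain x1 x2 where x: "x1 \<in> {a1, b1}" "x2 \<in> {a2, b2}" "close_gaps s e x1 = close_gaps s e x2"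
      using p 1 2 by blast
    then have "x1 = x2" using avoid[OF ab1] avoid[OF ab2] close_gaps_inj[OF _ _ se(1)] by blast
    then have "(a1, b1) = (a2, b2)" using unique[of a1 b1 a2 b2 x1] ab1 ab2 x by blast
    then show "(a1', b1') = (a2', b2')" using 1 2 by simp
  qed
qed

lemma remove_chord_length:
  assumes D: "is_diagram n D" and c: "(s, e) \<in> D" and "(a', b') \<in> remove_chord s e D"
  obtains a b where "(a, b) \<in> D - {(s, e)}"
    "b - a - (if a < s \<and> e < b then 2 else 1) \<le> b' - a'"
proof -
  obtain a b where ab: "(a, b) \<in> D - {(s, e)}"
    and a'b': "a' = close_gaps s e a" "b' = close_gaps s e b"
    using assms(3) unfolding remove_chord_def by auto
  have "{a, b} \<inter> {s, e} = {}"
    using ab c is_diagram_unique[OF D, of a b s e] by blast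
  then show ?thesis
    using that[OF ab] close_gaps_length[of a b s e] is_diagram_chord[OF D] ab c a'b' by auto
qed

lemma swap_step_cases:
  assumes D: "is_diagram n D" and c: "(s, 2*n - k + 1) \<in> D"
  obtains (stop) "swap_step n k C D = D"
  | (swap) t e' where "(t, e') \<in> D" "e' \<in> S_ends n k C" "s < t"
      "\<And>a b. (a, b) \<in> D \<Longrightarrow> b \<in> S_ends n k C \<Longrightarrow> s < a \<Longrightarrow> t \<le> a"
      "swap_step n k C D = D - {(s, 2*n - k + 1), (t, e')} \<union> {(t, 2*n - k + 1), (s, e')}"
proof -
  define cands where "cands = {t. \<exists>e'. (t, e') \<in> D \<and> e' \<in> S_ends n k C \<and> s < t}"
  have step: "swap_step n k C D = (if cands = {} then D else
      (let t = Min cands; e' = (THE e'. (t, e') \<in> D)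
       in D - {(s, 2*n - k + 1), (t, e')} \<union> {(t, 2*n - k + 1), (s, e')}))"
    unfolding swap_step_def Let_def the_start_eq[OF D c] cands_def ..
  show ?thesis
  proof (cases "cands = {}")
    case True
    then show ?thesis using step stop by simp
  next
    case False
    have "finite D"
      using finite_subset[of D "{1..2*n} \<times> {1..2*n}"] is_diagram_chord[OF D] by fastforce
    then have "finite cands"
      using finite_subset[of cands "fst ` D"] unfolding cands_def by force
    then have "Min cands \<in> cands" and min: "\<And>a. a \<in> cands \<Longrightarrow> Min cands \<le> a"
      using False by auto
    then obtain e' where e': "(Min cands, e') \<in> D" "e' \<in> S_ends n k C" "s < Min cands"
      unfolding cands_def by blast
    show ?thesis
    proof (rule swap[OF e'])
      show "\<And>a b. (a, b) \<in> D \<Longrightarrow> b \<in> S_ends n k C \<Longrightarrow> s < a \<Longrightarrow> Min cands \<le> a"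
        using min unfolding cands_def by blast
      show "swap_step n k C D
        = D - {(s, 2*n - k + 1), (Min cands, e')} \<union> {(Min cands, 2*n - k + 1), (s, e')}"
        using step False the_end_eq[OF D e'(1)] by (simp add: Let_def)
    qed
  qed
qed

text \<open>s is the current start of the moving chord. The bound k + 1 for chords passing over both
  of its ends is what lets them survive the deletion of two points.\<close>
definition sweep_invariant :: "nat \<Rightarrow> nat \<Rightarrow> diagram \<Rightarrow> diagram \<Rightarrow> bool" where
  "sweep_invariant n k C D \<longleftrightarrow> is_diagram n D \<and>
     (\<exists>s. (s, 2*n - k + 1) \<in> D \<and>
        (\<forall>(a, b)\<in>D. b \<noteq> 2*n - k + 1 \<longrightarrow>
           k \<le> b - a \<and> (a < s \<and> 2*n - k + 1 < b \<longrightarrow> k + 1 \<le> b - a))) \<and>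
     (\<forall>(a, b)\<in>D. b \<in> S_ends n k C \<longrightarrow> a \<le> k) \<and>
     (\<forall>(a, b)\<in>D. b \<notin> S_ends n k C \<longrightarrow> (a, b) \<in> C)"

lemma S_ends_start_le:
  assumes "C \<in> K k n" "(a, b) \<in> C" "b \<in> S_ends n k C"
  shows "a \<le> k"
proof -
  have D: "is_diagram n C" and len: "k \<le> b - a" using assms(1,2) unfolding K_def by auto
  obtain a' where "(a', b) \<in> C" "a' \<notin> Mset n k" "b \<notin> Mset n k"
    using assms(3) unfolding S_ends_def by blast
  moreover have "a' = a" using is_diagram_unique[OF D \<open>(a', b) \<in> C\<close> assms(2), of b] by simp
  ultimately show ?thesis using len is_diagram_chord[OF D assms(2)] unfolding Mset_def by auto
qed

text \<open>This is where \<open>n > 3(n - k)\<close>, i.e. \<open>3k > 2n\<close>, enters: the chord ending at 2n-k+1 has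
  length at least k, so it starts at or before 2n-2k+1 \<le> k.\<close>
lemma end_chord_in_S_ends:
  assumes "n > 3 * (n - k)" "C \<in> K k n"
  obtains s where "(s, 2*n - k + 1) \<in> C" "2*n - k + 1 \<in> S_ends n k C"
proof -
  have D: "is_diagram n C" and len: "\<And>a b. (a, b) \<in> C \<Longrightarrow> k \<le> b - a"
    using assms(2) unfolding K_def by auto
  have "2*n - k + 1 \<in> {1..2*n}" using assms(1) by auto
  then obtain a b where ab: "(a, b) \<in> C" "2*n - k + 1 \<in> {a, b}" by (rule is_diagram_cover[OF D])
  then have c: "(a, 2*n - k + 1) \<in> C"
    using is_diagram_chord[OF D ab(1)] len[OF ab(1)] assms(1) by auto
  moreover have "a \<le> k" using len[OF c] assms(1) by auto
  ultimately have "2*n - k + 1 \<in> S_ends n k C" unfolding S_ends_def Mset_def by auto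
  with c show ?thesis by (rule that)
qed

lemma sweep_invariant_init:
  assumes "n > 3 * (n - k)" "C \<in> K k n"
  shows "sweep_invariant n k C C"
proof -
  obtain s where c: "(s, 2*n - k + 1) \<in> C" using end_chord_in_S_ends[OF assms] .
  have "is_diagram n C" and len: "\<forall>(a, b)\<in>C. k \<le> b - a" using assms(2) unfolding K_def by auto
  moreover have "k + 1 \<le> b - a" if "a < s \<and> 2*n - k + 1 < b" for a b
  proof -
    have "k \<le> 2*n - k + 1 - s" using len c by blast
    then show ?thesis using that is_diagram_chord(1)[OF \<open>is_diagram n C\<close> c] by linarith
  qed
  ultimately have "\<forall>(a, b)\<in>C. b \<noteq> 2*n - k + 1 \<longrightarrow>
      k \<le> b - a \<and> (a < s \<and> 2*n - k + 1 < b \<longrightarrow> k + 1 \<le> b - a)"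
    by blast
  moreover have "\<forall>(a, b)\<in>C. b \<in> S_ends n k C \<longrightarrow> a \<le> k"
    using S_ends_start_le[OF assms(2)] by blast
  ultimately show ?thesis
    unfolding sweep_invariant_def using \<open>is_diagram n C\<close> c by blast
qed

text \<open>A chord starting strictly between the old and the new start of the moving chord cannot reach
  past M: if it ends in S_C, the swap partner was not minimal, and otherwise it is an original chord
  with an end point outside M, so its start lies in M, to the right of k.\<close>
lemma chord_between_starts_ends_le:
  assumes unmoved: "\<forall>(a, b)\<in>D. b \<notin> S_ends n k C \<longrightarrow> (a, b) \<in> C"
    and min: "\<And>a b. (a, b) \<in> D \<Longrightarrow> b \<in> S_ends n k C \<Longrightarrow> s < a \<Longrightarrow> t \<le> a"
    and "t \<le> k" "(a, b) \<in> D" "s < a" "a < t"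
  shows "b \<le> 2*n - k"
proof (rule ccontr)
  assume "\<not> b \<le> 2*n - k"
  then have "b \<notin> Mset n k" unfolding Mset_def by auto
  have "b \<notin> S_ends n k C" using min[OF \<open>(a, b) \<in> D\<close> _ \<open>s < a\<close>] \<open>a < t\<close> by force
  then have "(a, b) \<in> C" using unmoved \<open>(a, b) \<in> D\<close> by blast
  with \<open>b \<notin> Mset n k\<close> \<open>b \<notin> S_ends n k C\<close> have "a \<in> Mset n k" unfolding S_ends_def by blast
  then show False using \<open>a < t\<close> \<open>t \<le> k\<close> unfolding Mset_def by auto
qed

lemma sweep_invariant_step:
  assumes k: "n \<ge> k" "n > 3 * (n - k)" and C: "C \<in> K k n"
    and I: "sweep_invariant n k C D"
  shows "sweep_invariant n k C (swap_step n k C D)"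
proof -
  define e0 where "e0 = 2*n - k + 1"
  have D: "is_diagram n D"
    and S: "\<forall>(a, b)\<in>D. b \<in> S_ends n k C \<longrightarrow> a \<le> k"
    and unmoved: "\<forall>(a, b)\<in>D. b \<notin> S_ends n k C \<longrightarrow> (a, b) \<in> C"
    using I unfolding sweep_invariant_def by blast+
  obtain s where c: "(s, e0) \<in> D"
    and len: "\<forall>(a, b)\<in>D. b \<noteq> e0 \<longrightarrow> k \<le> b - a \<and> (a < s \<and> e0 < b \<longrightarrow> k + 1 \<le> b - a)"
    using I unfolding sweep_invariant_def e0_def by blast
  obtain s0 where "(s0, e0) \<in> C" and e0S: "e0 \<in> S_ends n k C"
    using end_chord_in_S_ends[OF k(2) C] unfolding e0_def .
  show ?thesis
  proof (rule swap_step_cases[OF D c[unfolded e0_def]])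
    assume "swap_step n k C D = D"
    then show ?thesis using I by simp
  next
    fix t e'
    assume c': "(t, e') \<in> D" and e'S: "e' \<in> S_ends n k C" and "s < t"
      and min: "\<And>a b. (a, b) \<in> D \<Longrightarrow> b \<in> S_ends n k C \<Longrightarrow> s < a \<Longrightarrow> t \<le> a"
      and swap: "swap_step n k C D = D - {(s, 2*n - k + 1), (t, e')} \<union> {(t, 2*n - k + 1), (s, e')}"
    let ?D' = "D - {(s, e0), (t, e')} \<union> {(t, e0), (s, e')}"
    have "t \<le> k" "s \<le> k" using S c c' e'S e0S by auto
    moreover have "e' \<noteq> e0" using is_diagram_unique[OF D c c', of e0] \<open>s < t\<close> by auto
    ultimately have "t < e0" and len': "k \<le> e' - t" and "t < e'"
      using k len c' is_diagram_chord[OF D c'] unfolding e0_def by auto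
    have "is_diagram n ?D'" using is_diagram_swap_starts[OF D c c' \<open>s < t\<close> \<open>t < e0\<close>] .
    moreover have "\<forall>(a, b)\<in>?D'. b \<noteq> e0 \<longrightarrow> k \<le> b - a \<and> (a < t \<and> e0 < b \<longrightarrow> k + 1 \<le> b - a)"
    proof (clarify)
      fix a b assume ab: "(a, b) \<in> ?D'" "b \<noteq> e0"
      have "(a, b) = (s, e') \<or> (a, b) \<in> D \<and> a \<noteq> s"
        using ab is_diagram_unique[OF D _ c, of a b s] by auto
      then show "k \<le> b - a \<and> (a < t \<and> e0 < b \<longrightarrow> k + 1 \<le> b - a)"
      proof
        assume "(a, b) = (s, e')"
        then show ?thesis using len' \<open>s < t\<close> \<open>t < e'\<close> by auto
      next
        assume abD: "(a, b) \<in> D \<and> a \<noteq> s"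
        then have "\<not> (s < a \<and> a < t \<and> e0 < b)"
          using chord_between_starts_ends_le[OF unmoved min \<open>t \<le> k\<close>, where a = a and b = b] unfolding e0_def by auto
        then show ?thesis using len abD ab(2) by force
      qed
    qed
    moreover have "\<forall>(a, b)\<in>?D'. b \<in> S_ends n k C \<longrightarrow> a \<le> k"
      using S \<open>t \<le> k\<close> \<open>s \<le> k\<close> by auto
    moreover have "\<forall>(a, b)\<in>?D'. b \<notin> S_ends n k C \<longrightarrow> (a, b) \<in> C"
      using unmoved e0S e'S by auto
    ultimately show ?thesis
      unfolding sweep_invariant_def swap e0_def[symmetric] by blast
  qed
qed

lemma sweep_invariant_iterate:
  assumes "n \<ge> k" "n > 3 * (n - k)" "C \<in> K k n"
  shows "sweep_invariant n k C ((swap_step n k C ^^ m) C)"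
  by (induction m) (auto intro: sweep_invariant_step[OF assms] sweep_invariant_init[OF assms(2,3)])

lemma beta_eq_remove_chord:
  assumes "is_diagram n D" "(s, 2*n - k + 1) \<in> D" "D = (swap_step n k C ^^ (2*n)) C"
  shows "beta n k C = remove_chord s (2*n - k + 1) D"
  unfolding beta_def Let_def remove_chord_def close_gaps_def
  using the_start_eq[OF assms(1,2)] assms(3) by simp

lemma sweep_invariant_remove_chord:
  assumes "sweep_invariant n k C D"
  obtains s where "(s, 2*n - k + 1) \<in> D" "remove_chord s (2*n - k + 1) D \<in> K (k - 1) (n - 1)"
proof -
  obtain s where D: "is_diagram n D" and c: "(s, 2*n - k + 1) \<in> D"
    and len: "\<forall>(a, b)\<in>D. b \<noteq> 2*n - k + 1 \<longrightarrow>
               k \<le> b - a \<and> (a < s \<and> 2*n - k + 1 < b \<longrightarrow> k + 1 \<le> b - a)"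
    using assms unfolding sweep_invariant_def by blast
  have "k - 1 \<le> b' - a'" if chord: "(a', b') \<in> remove_chord s (2*n - k + 1) D" for a' b'
  proof -
    obtain a b where ab: "(a, b) \<in> D - {(s, 2*n - k + 1)}"
      and shrink: "b - a - (if a < s \<and> 2*n - k + 1 < b then 2 else 1) \<le> b' - a'"
      using remove_chord_length[OF D c chord] .
    have "b \<noteq> 2*n - k + 1" using ab is_diagram_unique[OF D _ c, of a b] by auto
    then have "k \<le> b - a \<and> (a < s \<and> 2*n - k + 1 < b \<longrightarrow> k + 1 \<le> b - a)"
      using len ab by blast
    then show ?thesis using shrink by (simp split: if_splits)
  qed
  then have "remove_chord s (2*n - k + 1) D \<in> K (k - 1) (n - 1)"
    using is_diagram_remove_chord[OF D c] unfolding K_def by auto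
  with c show ?thesis by (rule that)
qed

theorem lemma5:
  fixes n k :: nat and C :: diagram
  assumes "0 < n" and "0 < k" and "n \<ge> k" and "n > 3 * (n - k)"
    and "C \<in> K k n"
  shows "beta n k C \<in> K (k - 1) (n - 1)"
proof -
  define D where "D = (swap_step n k C ^^ (2*n)) C"
  have I: "sweep_invariant n k C D"
    unfolding D_def using sweep_invariant_iterate assms(3-5) .
  then obtain s where c: "(s, 2*n - k + 1) \<in> D"
    and removed: "remove_chord s (2*n - k + 1) D \<in> K (k - 1) (n - 1)"
    by (rule sweep_invariant_remove_chord)
  have "is_diagram n D" using I unfolding sweep_invariant_def by blast
  then have "beta n k C = remove_chord s (2*n - k + 1) D" using c D_def by (rule beta_eq_remove_chord)
  with removed show ?thesis by simp
qed

end
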